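(* Let $A$ be a finite left brace of odd order with cyclic additive group and Z-group multiplicative group, written as $A=\bar{A}\times\bar{B}$ as described in the context. Then $\mathrm{Soc}(A)=\mathrm{Soc}(\bar{A})\times(B_{m+1}\times\dots\times B_r\times I_1\times\dots\times I_m)$. In particular, the quotient left brace $A/\mathrm{Soc}(A)$ has cyclic multiplicative group.
   Context: A left brace is a set $A$ with $(A,+)$ abelian group, $(A,\circ)$ group, $a\circ(b+c)=a\circ b-a+a\circ c$; $\lambda_a(b):=-a+a\circ b$, and $\mathrm{Soc}(A)=\{a\mid\lambda_a=\mathrm{id}\}$, an ideal. A trivial left brace has $a\circ b=a+b$. A Z-group is a finite group with all Sylow subgroups cyclic. Decomposition: there are integers $v,m,r\ge 0$ with $m\le r$, pairwise distinct odd primes $q_1,\dots,q_v,p_1,\dots,p_r$ with $p_1<\dots<p_r$, positive integers $\gamma_i,\beta_j$, left braces $A_1,\dots,A_v$ and $B_1,\dots,B_r$ with cyclic additive groups, $|A_i|=q_i^{\gamma_i}$, $|B_j|=p_j^{\beta_j}$, $B_{m+1},\dots,B_r$ trivial, and a homomorphism $\alpha:(B_1\times\dots\times B_m,\circ)\to\mathrm{Aut}(B_{m+1}\times\dots\times B_r,+)$ whose restriction to each $B_i$ ($i\le m$) is nontrivial and whose image acts nontrivially on each $B_i$ ($i>m$), such that $A=\bar A\times\bar B$ (direct product of left braces), where $\bar A=A_1\times\dots\times A_v$ is a direct product of left braces and $\bar B=(B_{m+1}\times\dots\times B_r)\rtimes_\alpha(B_1\times\dots\times B_m)$ is the semidirect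 product of left braces: additive group the direct product, and $(x,y)\circ(x',y')=(x\circ\alpha(y)(x'),y\circ y')$. For $j\le m$, $I_j:=\mathrm{Soc}(B_j)\cap\ker\alpha$. *)

theory Defs
  imports "HOL-Algebra.Algebra" "HOL-Computational_Algebra.Primes" "HOL-Library.FuncSet"
begin

text \<open>A left brace is given by a carrier, the addition, the multiplication circ,
  and the common neutral element (in any left brace the neutral elements of
  the additive and multiplicative groups coincide).\<close>

record 'a brace =
  carrier_b :: "'a set"
  plus_b :: "'a \<Rightarrow> 'a \<Rightarrow> 'a"
  circ_b :: "'a \<Rightarrow> 'a \<Rightarrow> 'a"
  zero_b :: "'a"

definition add_group :: "'a brace \<Rightarrow> 'a monoid" where
  "add_group B = \<lparr>carrier = carrier_b B, monoid.mult = plus_b B, one = zero_b B\<rparr>"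

definition mult_group :: "'a brace \<Rightarrow> 'a monoid" where
  "mult_group B = \<lparr>carrier = carrier_b B, monoid.mult = circ_b B, one = zero_b B\<rparr>"

definition neg_b :: "'a brace \<Rightarrow> 'a \<Rightarrow> 'a" where
  "neg_b B a = inv\<^bsub>add_group B\<^esub> a"

definition left_brace :: "'a brace \<Rightarrow> bool" where
  "left_brace B \<longleftrightarrow> comm_group (add_group B) \<and> group (mult_group B) \<and>
     (\<forall>a\<in>carrier_b B. \<forall>b\<in>carrier_b B. \<forall>c\<in>carrier_b B.
        circ_b B a (plus_b B b c) = plus_b B (plus_b B (circ_b B a b) (neg_b B a)) (circ_b B a c))"

definition lambda_b :: "'a brace \<Rightarrow> 'a \<Rightarrow> 'a \<Rightarrow> 'a" where
  "lambda_b B a b = plus_b B (neg_b B a) (circ_b B a b)"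

definition soc :: "'a brace \<Rightarrow> 'a set" where
  "soc B = {a \<in> carrier_b B. \<forall>b\<in>carrier_b B. lambda_b B a b = b}"

definition trivial_brace :: "'a brace \<Rightarrow> bool" where
  "trivial_brace B \<longleftrightarrow> (\<forall>a\<in>carrier_b B. \<forall>b\<in>carrier_b B. circ_b B a b = plus_b B a b)"

definition sylow_subgroup :: "('a, 'b) monoid_scheme \<Rightarrow> nat \<Rightarrow> 'a set \<Rightarrow> bool" where
  "sylow_subgroup G p P \<longleftrightarrow> Factorial_Ring.prime p \<and> subgroup P G \<and> card P = p ^ multiplicity p (order G)"

definition z_group :: "('a, 'b) monoid_scheme \<Rightarrow> bool" where
  "z_group G \<longleftrightarrow> group G \<and> finite (carrier G) \<and>
     (\<forall>p P. sylow_subgroup G p P \<longrightarrow> cyclic_group (subgroup_generated G P))"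

definition prod_brace :: "nat set \<Rightarrow> (nat \<Rightarrow> 'a brace) \<Rightarrow> (nat \<Rightarrow> 'a) brace" where
  "prod_brace I Bs = \<lparr>carrier_b = (\<Pi>\<^sub>E i\<in>I. carrier_b (Bs i)),
     plus_b = (\<lambda>f g. \<lambda>i\<in>I. plus_b (Bs i) (f i) (g i)),
     circ_b = (\<lambda>f g. \<lambda>i\<in>I. circ_b (Bs i) (f i) (g i)),
     zero_b = (\<lambda>i\<in>I. zero_b (Bs i))\<rparr>"

definition emb :: "nat set \<Rightarrow> (nat \<Rightarrow> 'a brace) \<Rightarrow> nat \<Rightarrow> 'a \<Rightarrow> (nat \<Rightarrow> 'a)" where
  "emb I Bs j b = (\<lambda>i\<in>I. if i = j then b else zero_b (Bs i))"

definition pair_brace :: "'a brace \<Rightarrow> 'b brace \<Rightarrow> ('a \<times> 'b) brace" where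
  "pair_brace A B = \<lparr>carrier_b = carrier_b A \<times> carrier_b B,
     plus_b = (\<lambda>(x,y) (x',y'). (plus_b A x x', plus_b B y y')),
     circ_b = (\<lambda>(x,y) (x',y'). (circ_b A x x', circ_b B y y')),
     zero_b = (zero_b A, zero_b B)\<rparr>"

definition semidirect_brace :: "'a brace \<Rightarrow> 'b brace \<Rightarrow> ('b \<Rightarrow> 'a \<Rightarrow> 'a) \<Rightarrow> ('a \<times> 'b) brace" where
  "semidirect_brace N H \<alpha> = \<lparr>carrier_b = carrier_b N \<times> carrier_b H,
     plus_b = (\<lambda>(x,y) (x',y'). (plus_b N x x', plus_b H y y')),
     circ_b = (\<lambda>(x,y) (x',y'). (circ_b N x (\<alpha> y x'), circ_b H y y')),
     zero_b = (zero_b N, zero_b H)\<rparr>"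

definition action_hom :: "'b brace \<Rightarrow> 'a brace \<Rightarrow> ('b \<Rightarrow> 'a \<Rightarrow> 'a) \<Rightarrow> bool" where
  "action_hom H N \<alpha> \<longleftrightarrow>
     (\<forall>y\<in>carrier_b H. \<alpha> y \<in> Group.iso (add_group N) (add_group N)) \<and>
     (\<forall>y\<in>carrier_b H. \<forall>y'\<in>carrier_b H. \<forall>x\<in>carrier_b N.
        \<alpha> (circ_b H y y') x = \<alpha> y (\<alpha> y' x))"

definition ker_action :: "'b brace \<Rightarrow> 'a brace \<Rightarrow> ('b \<Rightarrow> 'a \<Rightarrow> 'a) \<Rightarrow> 'b set" where
  "ker_action H N \<alpha> = {y \<in> carrier_b H. \<forall>x\<in>carrier_b N. \<alpha> y x = x}"

end

theory Submission
  imports Defs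
begin

text \<open>
  The map \<open>a \<mapsto> \<lambda>\<^sub>a\<close> is an action of \<open>(A,\<circ>)\<close> on \<open>A\<close>, so the socle, being its kernel,
  is a normal subgroup of \<open>(A,\<circ>)\<close>. In a direct product \<open>\<lambda>\<close> acts componentwise, and in the
  semidirect product of a trivial brace \<open>N\<close> by \<open>H\<close> the element \<open>(x, y)\<close> acts as
  \<open>(\<alpha>(y), \<lambda>\<^sub>y)\<close>; hence \<open>Soc(Abar \<times> (N \<times>\<^sub>\<alpha> H)) = Soc(Abar) \<times> N \<times> (Soc(H) \<inter> ker \<alpha>)\<close>.
  Since the factors \<open>B\<^sub>j\<close> of \<open>H\<close> have pairwise coprime orders, every component of \<open>y \<in> H\<close>
  is a power of \<open>y\<close>, so a subgroup of \<open>(H,\<circ>)\<close> contains \<open>y\<close> iff it contains each component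
  of \<open>y\<close>; this splits \<open>Soc(H) \<inter> ker \<alpha>\<close> into the product of the \<open>I\<^sub>j\<close>.

  As \<open>N\<close> lies in the socle, \<open>(a, h) \<mapsto> (a, 0, h)\<close> maps \<open>(Abar,\<circ>) \<times> (H,\<circ>)\<close> onto
  \<open>A/Soc(A)\<close>. Each \<open>(A\<^sub>i,\<circ>)\<close> and \<open>(B\<^sub>j,\<circ>)\<close> embeds into \<open>(A,\<circ>)\<close> as a Sylow subgroup,
  hence is cyclic since \<open>(A,\<circ>)\<close> is a Z-group; their orders are powers of distinct primes,
  so \<open>(Abar,\<circ>) \<times> (H,\<circ>)\<close> is cyclic, and so is its image \<open>A/Soc(A)\<close>.
\<close>

section \<open>The \<open>\<lambda>\<close>-action and the socle\<close>

lemma add_group_simps [simp]: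
  "carrier (add_group B) = carrier_b B" "monoid.mult (add_group B) = plus_b B"
  "one (add_group B) = zero_b B"
  by (simp_all add: add_group_def)

lemma mult_group_simps [simp]:
  "carrier (mult_group B) = carrier_b B" "monoid.mult (mult_group B) = circ_b B"
  "one (mult_group B) = zero_b B"
  by (simp_all add: mult_group_def)

lemma left_braceD:
  assumes "left_brace B"
  shows left_brace_add_comm_group: "comm_group (add_group B)"
    and left_brace_add_group: "group (add_group B)"
    and left_brace_mult_group: "group (mult_group B)"
    and left_brace_distrib: "\<And>a b c. \<lbrakk>a \<in> carrier_b B; b \<in> carrier_b B; c \<in> carrier_b B\<rbrakk> \<Longrightarrow>
          circ_b B a (plus_b B b c) = plus_b B (plus_b B (circ_b B a b) (neg_b B a)) (circ_b B a c)"
  using assms by (auto simp: left_brace_def comm_group_def)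

lemma lambda_b_closed:
  assumes "left_brace B" "a \<in> carrier_b B" "b \<in> carrier_b B"
  shows "lambda_b B a b \<in> carrier_b B"
proof -
  interpret P: group "add_group B" using left_brace_add_group[OF assms(1)] .
  interpret M: group "mult_group B" using left_brace_mult_group[OF assms(1)] .
  show ?thesis using assms(2,3) M.m_closed P.m_closed P.inv_closed
    by (simp add: lambda_b_def neg_b_def)
qed

lemma circ_b_eq_plus_lambda_b:
  assumes "left_brace B" "a \<in> carrier_b B" "b \<in> carrier_b B"
  shows "circ_b B a b = plus_b B a (lambda_b B a b)"
proof -
  interpret P: group "add_group B" using left_brace_add_group[OF assms(1)] .
  interpret M: group "mult_group B" using left_brace_mult_group[OF assms(1)] .
  show ?thesis
    using assms(2,3) M.m_closed[of a b] P.inv_closed[of a]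
    by (simp add: lambda_b_def neg_b_def P.m_assoc[symmetric, simplified] P.r_inv[simplified] P.l_one[simplified])
qed

lemma lambda_b_plus:
  assumes "left_brace B" "a \<in> carrier_b B" "b \<in> carrier_b B" "c \<in> carrier_b B"
  shows "lambda_b B a (plus_b B b c) = plus_b B (lambda_b B a b) (lambda_b B a c)"
proof -
  interpret P: comm_group "add_group B" using left_brace_add_comm_group[OF assms(1)] .
  interpret M: group "mult_group B" using left_brace_mult_group[OF assms(1)] .
  show ?thesis
    using assms(2-4) M.m_closed P.inv_closed[of a] left_brace_distrib[OF assms]
    by (simp add: lambda_b_def neg_b_def P.m_ac[simplified] P.m_closed[simplified])
qed

lemma lambda_b_circ:
  assumes B: "left_brace B" and a: "a \<in> carrier_b B" and b: "b \<in> carrier_b B" and c: "c \<in> carrier_b B"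
  shows "lambda_b B (circ_b B a b) c = lambda_b B a (lambda_b B b c)"
proof -
  interpret P: group "add_group B" using left_brace_add_group[OF B] .
  interpret M: group "mult_group B" using left_brace_mult_group[OF B] .
  have ab: "circ_b B a b \<in> carrier_b B" using a b M.m_closed by simp
  note lam = lambda_b_closed[OF B] circ_b_eq_plus_lambda_b[OF B]
  \<comment> \<open>expand \<open>(a \<circ> b) \<circ> c = a \<circ> (b \<circ> c)\<close> via \<open>x \<circ> y = x + \<lambda>\<^sub>x y\<close> and cancel \<open>a \<circ> b\<close>\<close>
  have "plus_b B (circ_b B a b) (lambda_b B (circ_b B a b) c) = circ_b B (circ_b B a b) c"
    using ab c by (simp add: lam)
  also have "\<dots> = circ_b B a (circ_b B b c)" using a b c M.m_assoc by simp
  also have "\<dots> = plus_b B a (lambda_b B a (plus_b B b (lambda_b B b c)))"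
    using a b c P.m_closed lam(1)[OF b c] by (simp add: lam)
  also have "\<dots> = plus_b B (circ_b B a b) (lambda_b B a (lambda_b B b c))"
    using a b c by (simp add: lam lambda_b_plus[OF B] P.m_assoc[simplified])
  finally show ?thesis using ab a b c lam P.l_cancel by simp
qed

lemma lambda_b_zero:
  assumes "left_brace B" "c \<in> carrier_b B"
  shows "lambda_b B (zero_b B) c = c"
proof -
  interpret P: group "add_group B" using left_brace_add_group[OF assms(1)] .
  interpret M: group "mult_group B" using left_brace_mult_group[OF assms(1)] .
  show ?thesis using assms(2) P.inv_one M.l_one P.l_one by (simp add: lambda_b_def neg_b_def)
qed

lemma action_kernel_normal:
  assumes G: "group G"
    and closed: "\<And>g x. g \<in> carrier G \<Longrightarrow> x \<in> S \<Longrightarrow> f g x \<in> S"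
    and compat: "\<And>g h x. g \<in> carrier G \<Longrightarrow> h \<in> carrier G \<Longrightarrow> x \<in> S \<Longrightarrow>
                   f (g \<otimes>\<^bsub>G\<^esub> h) x = f g (f h x)"
    and unit: "\<And>x. x \<in> S \<Longrightarrow> f \<one>\<^bsub>G\<^esub> x = x"
  shows "{g \<in> carrier G. \<forall>x\<in>S. f g x = x} \<lhd> G"
proof -
  interpret G: group G by (rule G)
  have inverse: "f (inv\<^bsub>G\<^esub> g) (f g x) = x" "f g (f (inv\<^bsub>G\<^esub> g) x) = x"
    if "g \<in> carrier G" "x \<in> S" for g x
    using that compat[of "inv\<^bsub>G\<^esub> g" g x] compat[of g "inv\<^bsub>G\<^esub> g" x] unit by simp_all
  have Bij: "restrict (f g) S \<in> Bij S" if "g \<in> carrier G" for g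
    unfolding Bij_def using that closed inverse
    by (auto intro!: bij_betwI[where g = "f (inv\<^bsub>G\<^esub> g)"] cong: bij_betw_cong)
  have "(\<lambda>g. restrict (f g) S) \<in> hom G (BijGroup S)"
    using Bij closed by (auto intro!: homI restrict_ext simp: BijGroup_def compose_def compat)
  then interpret group_hom G "BijGroup S" "\<lambda>g. restrict (f g) S"
    by (simp add: group_hom_def group_hom_axioms_def group_BijGroup)
  have "{g \<in> carrier G. \<forall>x\<in>S. f g x = x} = kernel G (BijGroup S) (\<lambda>g. restrict (f g) S)"
    by (auto simp: kernel_def BijGroup_def restrict_def fun_eq_iff)
  then show ?thesis using normal_kernel by simp
qed

lemma soc_normal:
  assumes "left_brace B"
  shows "soc B \<lhd> mult_group B"
  using action_kernel_normal[of "mult_group B" "carrier_b B" "lambda_b B"]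
    left_brace_mult_group[OF assms] lambda_b_closed[OF assms] lambda_b_circ[OF assms]
    lambda_b_zero[OF assms]
  by (simp add: soc_def)

lemma action_hom_closed:
  "action_hom H N \<alpha> \<Longrightarrow> y \<in> carrier_b H \<Longrightarrow> x \<in> carrier_b N \<Longrightarrow> \<alpha> y x \<in> carrier_b N"
  by (auto simp: action_hom_def Group.iso_def hom_def)

lemma action_hom_zero:
  assumes "action_hom H N \<alpha>" "group (add_group N)" "y \<in> carrier_b H"
  shows "\<alpha> y (zero_b N) = zero_b N"
  using assms hom_one[of "\<alpha> y" "add_group N" "add_group N"] by (simp add: action_hom_def Group.iso_def)

lemma ker_action_normal:
  assumes \<alpha>: "action_hom H N \<alpha>" and H: "group (mult_group H)"
  shows "ker_action H N \<alpha> \<lhd> mult_group H"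
proof -
  interpret H: group "mult_group H" by (rule H)
  have compat: "\<alpha> (circ_b H y y') x = \<alpha> y (\<alpha> y' x)"
    if "y \<in> carrier_b H" "y' \<in> carrier_b H" "x \<in> carrier_b N" for y y' x
    using \<alpha> that by (simp add: action_hom_def)
  have "\<alpha> (zero_b H) x = x" if x: "x \<in> carrier_b N" for x
  proof -
    have "\<alpha> (zero_b H) (\<alpha> (zero_b H) x) = \<alpha> (zero_b H) x"
      using compat[of "zero_b H" "zero_b H" x] H.one_closed H.l_one[of "zero_b H"] x by simp
    moreover have "inj_on (\<alpha> (zero_b H)) (carrier_b N)"
      using \<alpha> H.one_closed by (simp add: action_hom_def Group.iso_def bij_betw_def)
    ultimately show ?thesis
      using H.one_closed action_hom_closed[OF \<alpha>] x by (simp add: inj_on_eq_iff)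
  qed
  then show ?thesis
    using action_kernel_normal[of "mult_group H" "carrier_b N" \<alpha>] H compat action_hom_closed[OF \<alpha>]
    by (simp add: ker_action_def)
qed

section \<open>Direct and semidirect products of braces\<close>

lemma prod_brace_simps [simp]:
  "carrier_b (prod_brace I Bs) = (\<Pi>\<^sub>E i\<in>I. carrier_b (Bs i))"
  "plus_b (prod_brace I Bs) f g = (\<lambda>i\<in>I. plus_b (Bs i) (f i) (g i))"
  "circ_b (prod_brace I Bs) f g = (\<lambda>i\<in>I. circ_b (Bs i) (f i) (g i))"
  "zero_b (prod_brace I Bs) = (\<lambda>i\<in>I. zero_b (Bs i))"
  by (simp_all add: prod_brace_def)

lemma pair_brace_simps [simp]:
  "carrier_b (pair_brace A B) = carrier_b A \<times> carrier_b B"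
  "plus_b (pair_brace A B) (x, y) (x', y') = (plus_b A x x', plus_b B y y')"
  "circ_b (pair_brace A B) (x, y) (x', y') = (circ_b A x x', circ_b B y y')"
  "zero_b (pair_brace A B) = (zero_b A, zero_b B)"
  by (simp_all add: pair_brace_def)

lemma semidirect_brace_simps [simp]:
  "carrier_b (semidirect_brace N H \<alpha>) = carrier_b N \<times> carrier_b H"
  "plus_b (semidirect_brace N H \<alpha>) (x, y) (x', y') = (plus_b N x x', plus_b H y y')"
  "circ_b (semidirect_brace N H \<alpha>) (x, y) (x', y') = (circ_b N x (\<alpha> y x'), circ_b H y y')"
  "zero_b (semidirect_brace N H \<alpha>) = (zero_b N, zero_b H)"
  by (simp_all add: semidirect_brace_def)

lemma add_group_prod_brace: "add_group (prod_brace I Bs) = product_group I (\<lambda>i. add_group (Bs i))"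
  by (simp add: add_group_def product_group_def prod_brace_def)

lemma mult_group_prod_brace: "mult_group (prod_brace I Bs) = product_group I (\<lambda>i. mult_group (Bs i))"
  by (simp add: mult_group_def product_group_def prod_brace_def)

lemma add_group_pair_brace: "add_group (pair_brace A B) = add_group A \<times>\<times> add_group B"
  by (simp add: add_group_def DirProd_def pair_brace_def)

lemma mult_group_pair_brace: "mult_group (pair_brace A B) = mult_group A \<times>\<times> mult_group B"
  by (simp add: mult_group_def DirProd_def pair_brace_def)

lemma add_group_semidirect_brace:
  "add_group (semidirect_brace N H \<alpha>) = add_group N \<times>\<times> add_group H"
  by (simp add: add_group_def DirProd_def semidirect_brace_def)

lemma trivial_brace_prod_brace:
  "(\<And>i. i \<in> I \<Longrightarrow> trivial_brace (Bs i)) \<Longrightarrow> trivial_brace (prod_brace I Bs)"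
  by (auto simp: trivial_brace_def PiE_iff intro!: restrict_ext)

lemma lambda_b_prod_brace:
  assumes "\<And>i. i \<in> I \<Longrightarrow> group (add_group (Bs i))" "y \<in> carrier_b (prod_brace I Bs)"
  shows "lambda_b (prod_brace I Bs) y z = (\<lambda>i\<in>I. lambda_b (Bs i) (y i) (z i))"
  using assms
  by (simp add: lambda_b_def neg_b_def add_group_prod_brace cong: restrict_cong)

lemma lambda_b_pair_brace:
  assumes "group (add_group A)" "group (add_group B)" "x \<in> carrier_b A" "y \<in> carrier_b B"
  shows "lambda_b (pair_brace A B) (x, y) (x', y') = (lambda_b A x x', lambda_b B y y')"
  using assms by (simp add: lambda_b_def neg_b_def add_group_pair_brace)

lemma lambda_b_semidirect_brace:
  assumes "group (add_group N)" "group (add_group H)" "x \<in> carrier_b N" "y \<in> carrier_b H"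
    and "trivial_brace N" "\<alpha> y x' \<in> carrier_b N"
  shows "lambda_b (semidirect_brace N H \<alpha>) (x, y) (x', y') = (\<alpha> y x', lambda_b H y y')"
proof -
  interpret P: group "add_group N" by fact
  have "plus_b N (neg_b N x) (circ_b N x (\<alpha> y x')) = \<alpha> y x'"
    using assms(3,5,6) P.inv_closed[of x]
    by (simp add: trivial_brace_def neg_b_def P.m_assoc[symmetric, simplified] P.l_inv[simplified]
        P.l_one[simplified])
  then show ?thesis using assms(1-4) by (simp add: lambda_b_def neg_b_def add_group_semidirect_brace)
qed

lemma zero_b_closed: "group (add_group B) \<Longrightarrow> zero_b B \<in> carrier_b B"
  using monoid.one_closed[OF group.is_monoid, of "add_group B"] by simp

lemma zero_b_mem_soc:
  assumes "group (add_group B)" "group (mult_group B)"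
  shows "zero_b B \<in> soc B"
proof -
  interpret P: group "add_group B" by fact
  interpret M: group "mult_group B" by fact
  show ?thesis
    using P.inv_one P.one_closed M.l_one[simplified] P.l_one[simplified]
    by (simp add: soc_def lambda_b_def neg_b_def)
qed

lemma soc_pair_brace:
  assumes "group (add_group A)" "group (add_group B)"
  shows "soc (pair_brace A B) = soc A \<times> soc B"
  using zero_b_closed[OF assms(1)] zero_b_closed[OF assms(2)]
  by (fastforce simp: soc_def lambda_b_pair_brace[OF assms])

lemma soc_semidirect_brace:
  assumes "group (add_group N)" "group (add_group H)" "trivial_brace N"
    and "\<And>y x. y \<in> carrier_b H \<Longrightarrow> x \<in> carrier_b N \<Longrightarrow> \<alpha> y x \<in> carrier_b N"
  shows "soc (semidirect_brace N H \<alpha>) = carrier_b N \<times> (soc H \<inter> ker_action H N \<alpha>)"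
  using zero_b_closed[OF assms(1)] zero_b_closed[OF assms(2)] assms(4)
  by (fastforce simp: soc_def ker_action_def lambda_b_semidirect_brace[OF assms(1,2) _ _ assms(3)])

lemma emb_closed:
  assumes "\<And>i. i \<in> I \<Longrightarrow> group (add_group (Bs i))" "j \<in> I" "b \<in> carrier_b (Bs j)"
  shows "emb I Bs j b \<in> carrier_b (prod_brace I Bs)"
  using assms by (auto simp: emb_def intro!: zero_b_closed)

lemma soc_prod_brace:
  assumes "\<And>i. i \<in> I \<Longrightarrow> group (add_group (Bs i))"
  shows "soc (prod_brace I Bs) = (\<Pi>\<^sub>E j\<in>I. soc (Bs j))"
proof (intro equalityI subsetI)
  fix y assume y: "y \<in> soc (prod_brace I Bs)"
  have "lambda_b (Bs j) (y j) b = b" if "j \<in> I" "b \<in> carrier_b (Bs j)" for j b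
  proof -
    have "lambda_b (prod_brace I Bs) y (emb I Bs j b) j = emb I Bs j b j"
      using y emb_closed[of I Bs, OF assms that] by (simp add: soc_def)
    then show ?thesis using y that by (simp add: soc_def lambda_b_prod_brace[OF assms] emb_def)
  qed
  then show "y \<in> (\<Pi>\<^sub>E j\<in>I. soc (Bs j))" using y by (auto simp: soc_def)
next
  fix y assume "y \<in> (\<Pi>\<^sub>E j\<in>I. soc (Bs j))"
  then show "y \<in> soc (prod_brace I Bs)"
    by (auto simp: soc_def lambda_b_prod_brace[OF assms] PiE_iff extensional_def)
qed

section \<open>Subgroups of products of groups of coprime orders\<close>

lemma pow_product_group:
  assumes "x \<in> carrier (product_group I G)"
  shows "x [^]\<^bsub>product_group I G\<^esub> (n::nat) = (\<lambda>i\<in>I. x i [^]\<^bsub>G i\<^esub> n)"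
  using assms by (induction n) (auto simp: PiE_iff cong: restrict_cong)

lemma pow_DirProd:
  "(x, y) [^]\<^bsub>G \<times>\<times> H\<^esub> (n::nat) = (x [^]\<^bsub>G\<^esub> n, y [^]\<^bsub>H\<^esub> n)"
  by (induction n) simp_all


lemma emb_mult_group_pow:
  assumes "\<And>i. i \<in> I \<Longrightarrow> group (mult_group (Bs i))" "j \<in> I" "b \<in> carrier_b (Bs j)"
  shows "emb I Bs j b [^]\<^bsub>mult_group (prod_brace I Bs)\<^esub> (n::nat) = emb I Bs j (b [^]\<^bsub>mult_group (Bs j)\<^esub> n)"
proof -
  have "emb I Bs j b \<in> carrier (product_group I (\<lambda>i. mult_group (Bs i)))"
    using assms monoid.one_closed[OF group.is_monoid] by (fastforce simp: emb_def)
  then show ?thesis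
    using assms monoid.nat_pow_one[OF group.is_monoid, of "mult_group (Bs i)" n for i]
    by (auto simp: mult_group_prod_brace pow_product_group emb_def intro!: restrict_ext)
qed

lemma (in group) subgroup_nat_pow_closed:
  "subgroup H G \<Longrightarrow> h \<in> H \<Longrightarrow> h [^] (n::nat) \<in> H"
  using subgroup_int_pow_closed[of H h "int n"] by (simp add: int_pow_int)

lemma emb_component_mem_subgroup:
  assumes fin: "finite I"
    and groups: "\<And>i. i \<in> I \<Longrightarrow> group (mult_group (Bs i)) \<and> finite (carrier_b (Bs i))"
    and coprime: "\<And>i k. i \<in> I \<Longrightarrow> k \<in> I \<Longrightarrow> i \<noteq> k \<Longrightarrow>
                    coprime (card (carrier_b (Bs i))) (card (carrier_b (Bs k)))"
    and K: "subgroup K (mult_group (prod_brace I Bs))" and y: "y \<in> K" and j: "j \<in> I"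
  shows "emb I Bs j (y j) \<in> K"
proof -
  let ?G = "\<lambda>i. mult_group (Bs i)"
  \<comment> \<open>\<open>y\<^sup>M\<close> kills every component but the \<open>j\<close>-th, and \<open>M\<close> is invertible modulo \<open>|B\<^sub>j|\<close>\<close>
  define M where "M = (\<Prod>k\<in>I - {j}. card (carrier_b (Bs k)))"
  define n where "n = card (carrier_b (Bs j))"
  interpret Gj: group "?G j" using groups j by blast
  have y_carrier: "y \<in> (\<Pi>\<^sub>E i\<in>I. carrier_b (Bs i))"
    using subgroup.subset[OF K] y by (auto simp: mult_group_prod_brace)
  then have yj: "y j \<in> carrier_b (Bs j)" using j by blast
  have "y i [^]\<^bsub>?G i\<^esub> M = zero_b (Bs i)" if "i \<in> I" "i \<noteq> j" for i
  proof -
    interpret Gi: group "?G i" using groups that(1) by blast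
    have "card (carrier_b (Bs i)) dvd M"
      unfolding M_def using fin that by (intro dvd_prodI) auto
    then obtain c where "M = card (carrier_b (Bs i)) * c" ..
    moreover have "y i \<in> carrier_b (Bs i)" using y_carrier that by blast
    ultimately show ?thesis
      using Gi.pow_order_eq_1[of "y i"] Gi.nat_pow_one[simplified]
        Gi.nat_pow_pow[of "y i" "card (carrier_b (Bs i))" c]
      by (simp add: order_def)
  qed
  then have yM: "y [^]\<^bsub>mult_group (prod_brace I Bs)\<^esub> M = emb I Bs j (y j [^]\<^bsub>?G j\<^esub> M)"
    using y_carrier by (auto simp: mult_group_prod_brace pow_product_group emb_def intro!: restrict_ext)
  have "coprime M n"
    unfolding M_def n_def using coprime j by (auto intro: prod_coprime_left)
  moreover have "M \<noteq> 0"
  proof -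
    have "carrier_b (Bs i) \<noteq> {}" if "i \<in> I" for i
      using groups[OF that] monoid.one_closed[OF group.is_monoid, of "?G i"] by auto
    then show ?thesis unfolding M_def using groups fin by simp
  qed
  ultimately obtain a b where ab: "M * a = n * b + 1" using bezout_nat[of M n] by auto
  have "(y j [^]\<^bsub>?G j\<^esub> M) [^]\<^bsub>?G j\<^esub> a = y j [^]\<^bsub>?G j\<^esub> (n * b + 1)"
    using yj by (simp add: Gj.nat_pow_pow ab)
  also have "\<dots> = y j"
    using yj Gj.pow_order_eq_1[of "y j"] Gj.nat_pow_one[simplified] Gj.l_one[simplified]
    by (simp add: Gj.nat_pow_mult[symmetric] Gj.nat_pow_pow[symmetric] order_def n_def)
  finally have "(y j [^]\<^bsub>?G j\<^esub> M) [^]\<^bsub>?G j\<^esub> a = y j" .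
  then have "emb I Bs j (y j) = (y [^]\<^bsub>mult_group (prod_brace I Bs)\<^esub> M) [^]\<^bsub>mult_group (prod_brace I Bs)\<^esub> a"
    using yM emb_mult_group_pow[of I Bs j "y j [^]\<^bsub>?G j\<^esub> M" a] groups j yj
      Gj.nat_pow_closed[of "y j" M] by simp
  moreover have "group (mult_group (prod_brace I Bs))"
    using groups by (simp add: mult_group_prod_brace)
  ultimately show ?thesis
    using K y by (simp add: group.subgroup_nat_pow_closed)
qed

lemma mem_subgroup_if_emb_components:
  assumes fin: "finite I" and groups: "\<And>i. i \<in> I \<Longrightarrow> group (mult_group (Bs i))"
    and K: "subgroup K (mult_group (prod_brace I Bs))"
    and y: "y \<in> carrier_b (prod_brace I Bs)" and comps: "\<And>j. j \<in> I \<Longrightarrow> emb I Bs j (y j) \<in> K"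
  shows "y \<in> K"
proof -
  let ?part = "\<lambda>J. \<lambda>i\<in>I. if i \<in> J then y i else zero_b (Bs i)"
  have part: "?part J \<in> K" if "J \<subseteq> I" for J
    using finite_subset[OF that fin] that
  proof (induction J rule: finite_induct)
    case empty
    have "?part {} = \<one>\<^bsub>mult_group (prod_brace I Bs)\<^esub>" by (auto intro: restrict_ext)
    with subgroup.one_closed[OF K] show ?case by metis
  next
    case (insert a J)
    have "?part (insert a J) = circ_b (prod_brace I Bs) (?part J) (emb I Bs a (y a))"
      unfolding prod_brace_simps
    proof (rule restrict_ext)
      fix i assume i: "i \<in> I"
      interpret Gi: group "mult_group (Bs i)" using groups[OF i] .
      have "y i \<in> carrier_b (Bs i)" using y i by auto
      then show "(if i \<in> insert a J then y i else zero_b (Bs i))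
          = circ_b (Bs i) (?part J i) (emb I Bs a (y a) i)"
        using i insert.hyps(2) Gi.l_one[simplified] Gi.r_one[simplified] Gi.one_closed[simplified]
        by (auto simp: emb_def)
    qed
    moreover have "?part J \<in> K" using insert.IH insert.prems by blast
    moreover have "emb I Bs a (y a) \<in> K" using insert.prems comps by blast
    ultimately show ?case using subgroup.m_closed[OF K] by (metis mult_group_simps(2))
  qed
  moreover have "?part I = y" using y by (auto simp: PiE_iff extensional_def)
  ultimately show ?thesis using part[OF subset_refl] by metis
qed

lemma soc_prod_brace_inter_subgroup:
  assumes fin: "finite I"
    and braces: "\<And>i. i \<in> I \<Longrightarrow> left_brace (Bs i) \<and> finite (carrier_b (Bs i))"
    and coprime: "\<And>i k. i \<in> I \<Longrightarrow> k \<in> I \<Longrightarrow> i \<noteq> k \<Longrightarrow>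
                    coprime (card (carrier_b (Bs i))) (card (carrier_b (Bs k)))"
    and K: "subgroup K (mult_group (prod_brace I Bs))"
  shows "soc (prod_brace I Bs) \<inter> K = (\<Pi>\<^sub>E j\<in>I. {b \<in> soc (Bs j). emb I Bs j b \<in> K})"
proof -
  have groups: "group (add_group (Bs i))" "group (mult_group (Bs i))" if "i \<in> I" for i
    using braces[OF that] by (simp_all add: left_brace_add_group left_brace_mult_group)
  have "y \<in> K \<longleftrightarrow> (\<forall>j\<in>I. emb I Bs j (y j) \<in> K)" if "y \<in> (\<Pi>\<^sub>E j\<in>I. soc (Bs j))" for y
  proof -
    have "y \<in> carrier_b (prod_brace I Bs)" using that by (auto simp: soc_def)
    then show ?thesis
      using emb_component_mem_subgroup[of I Bs K y] mem_subgroup_if_emb_components[of I Bs K y]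
        fin braces groups coprime K
      by blast
  qed
  moreover have "soc (prod_brace I Bs) = (\<Pi>\<^sub>E j\<in>I. soc (Bs j))"
    using groups(1) by (rule soc_prod_brace)
  ultimately show ?thesis by auto
qed

lemma soc_pair_semidirect_prod_brace:
  fixes A :: "'a brace" and N :: "'b brace" and J :: "nat set" and Bs :: "nat \<Rightarrow> 'c brace"
    and \<alpha> :: "(nat \<Rightarrow> 'c) \<Rightarrow> 'b \<Rightarrow> 'b"
  defines "H \<equiv> prod_brace J Bs"
  assumes A: "group (add_group A)" and N: "group (add_group N)" "trivial_brace N"
    and fin: "finite J"
    and factors: "\<And>j. j \<in> J \<Longrightarrow> left_brace (Bs j) \<and> finite (carrier_b (Bs j))"
    and coprime: "\<And>j k. j \<in> J \<Longrightarrow> k \<in> J \<Longrightarrow> j \<noteq> k \<Longrightarrow>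
                    coprime (card (carrier_b (Bs j))) (card (carrier_b (Bs k)))"
    and \<alpha>: "action_hom H N \<alpha>"
  shows "soc (pair_brace A (semidirect_brace N H \<alpha>))
         = soc A \<times> (carrier_b N \<times> (\<Pi>\<^sub>E j\<in>J. {b \<in> soc (Bs j). emb J Bs j b \<in> ker_action H N \<alpha>}))"
proof -
  have H_groups: "group (add_group H)" "group (mult_group H)"
    using factors
    by (auto simp: H_def add_group_prod_brace mult_group_prod_brace
        intro!: product_group left_brace_add_group left_brace_mult_group)
  have "soc (pair_brace A (semidirect_brace N H \<alpha>)) = soc A \<times> soc (semidirect_brace N H \<alpha>)"
    using A N H_groups by (intro soc_pair_brace) (simp_all add: add_group_semidirect_brace DirProd_group)
  also have "soc (semidirect_brace N H \<alpha>) = carrier_b N \<times> (soc H \<inter> ker_action H N \<alpha>)"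
    by (rule soc_semidirect_brace[OF N(1) H_groups(1) N(2) action_hom_closed[OF \<alpha>]])
  also have "soc H \<inter> ker_action H N \<alpha> = (\<Pi>\<^sub>E j\<in>J. {b \<in> soc (Bs j). emb J Bs j b \<in> ker_action H N \<alpha>})"
    using fin factors coprime ker_action_normal[OF \<alpha> H_groups(2)]
    unfolding H_def by (intro soc_prod_brace_inter_subgroup) (auto simp: normal_imp_subgroup)
  finally show ?thesis .
qed

section \<open>Cyclicity\<close>

lemma (in group) cyclic_group_if_ord_eq_order:
  assumes "finite (carrier G)" "x \<in> carrier G" "ord x = order G"
  shows "cyclic_group G"
proof -
  have "generate G {x} = carrier G"
    using assms generate_pow_card[OF assms(2)] generate_incl[of "{x}"]
    by (intro card_subset_eq) (auto simp: order_def)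
  then show ?thesis
    using assms(2) by (auto simp: cyclic_group generate_pow[OF assms(2)] full_SetCompr_eq)
qed

lemma (in group) ord_eq_order_if_cyclic:
  assumes "cyclic_group G"
  obtains x where "x \<in> carrier G" "ord x = order G"
  using assms cyclic_order_is_ord by (auto simp: cyclic_group_def)

lemma prod_dvd_if_pairwise_coprime:
  fixes f :: "'i \<Rightarrow> nat"
  assumes "finite I" "\<And>i k. i \<in> I \<Longrightarrow> k \<in> I \<Longrightarrow> i \<noteq> k \<Longrightarrow> coprime (f i) (f k)"
    and "\<And>i. i \<in> I \<Longrightarrow> f i dvd n"
  shows "prod f I dvd n"
  using assms
proof (induction I rule: finite_induct)
  case (insert a I)
  then show ?case by (auto intro!: divides_mult prod_coprime_right)
qed simp

lemma cyclic_product_group: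
  assumes fin: "finite I"
    and groups: "\<And>i. i \<in> I \<Longrightarrow> group (G i) \<and> finite (carrier (G i)) \<and> cyclic_group (G i)"
    and coprime: "\<And>i k. i \<in> I \<Longrightarrow> k \<in> I \<Longrightarrow> i \<noteq> k \<Longrightarrow> coprime (order (G i)) (order (G k))"
  shows "cyclic_group (product_group I G)"
proof -
  let ?P = "product_group I G"
  interpret P: group ?P using groups by simp
  have "\<exists>x. x \<in> carrier (G i) \<and> group.ord (G i) x = order (G i)" if "i \<in> I" for i
    using groups[OF that] group.ord_eq_order_if_cyclic by metis
  then obtain g where g: "\<And>i. i \<in> I \<Longrightarrow> g i \<in> carrier (G i) \<and> group.ord (G i) (g i) = order (G i)"
    by metis
  let ?g = "\<lambda>i\<in>I. g i"
  have g_carrier: "?g \<in> carrier ?P" using g by auto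
  have order_P: "order ?P = (\<Prod>i\<in>I. order (G i))"
    by (simp add: order_def card_PiE[OF fin])
  have "order (G i) dvd P.ord ?g" if i: "i \<in> I" for i
  proof -
    have "?g [^]\<^bsub>?P\<^esub> P.ord ?g = \<one>\<^bsub>?P\<^esub>" using g_carrier by simp
    then have "g i [^]\<^bsub>G i\<^esub> P.ord ?g = \<one>\<^bsub>G i\<^esub>"
      using i g_carrier by (simp add: pow_product_group fun_eq_iff split: if_splits)
    then show ?thesis
      using g[OF i] groups[OF i] group.pow_eq_id by fastforce
  qed
  then have "order ?P dvd P.ord ?g"
    unfolding order_P using fin coprime by (intro prod_dvd_if_pairwise_coprime)
  moreover have "P.ord ?g dvd order ?P" using g_carrier by (rule P.ord_dvd_group_order)
  ultimately have "P.ord ?g = order ?P" by (rule dvd_antisym[symmetric])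
  moreover have "finite (carrier ?P)" using groups fin by (simp add: finite_PiE)
  ultimately show ?thesis using g_carrier by (intro P.cyclic_group_if_ord_eq_order)
qed

lemma cyclic_DirProd:
  assumes G: "group G" "finite (carrier G)" "cyclic_group G"
    and H: "group H" "finite (carrier H)" "cyclic_group H"
    and coprime: "coprime (order G) (order H)"
  shows "cyclic_group (G \<times>\<times> H)"
proof -
  interpret GH: group "G \<times>\<times> H" using G H by (simp add: DirProd_group)
  obtain g where g: "g \<in> carrier G" "group.ord G g = order G"
    using group.ord_eq_order_if_cyclic[OF G(1,3)] by metis
  obtain h where h: "h \<in> carrier H" "group.ord H h = order H"
    using group.ord_eq_order_if_cyclic[OF H(1,3)] by metis
  have gh: "(g, h) \<in> carrier (G \<times>\<times> H)" using g h by simp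
  have "(g, h) [^]\<^bsub>G \<times>\<times> H\<^esub> GH.ord (g, h) = \<one>\<^bsub>G \<times>\<times> H\<^esub>" using gh by simp
  then have "order G dvd GH.ord (g, h)" "order H dvd GH.ord (g, h)"
    using g h group.pow_eq_id[OF G(1)] group.pow_eq_id[OF H(1)] by (auto simp: pow_DirProd)
  then have "order (G \<times>\<times> H) dvd GH.ord (g, h)"
    using coprime by (simp add: order_def card_cartesian_product divides_mult)
  moreover have "GH.ord (g, h) dvd order (G \<times>\<times> H)" using gh by (rule GH.ord_dvd_group_order)
  ultimately have "GH.ord (g, h) = order (G \<times>\<times> H)" by (rule dvd_antisym[symmetric])
  then show ?thesis using gh G(2) H(2) by (intro GH.cyclic_group_if_ord_eq_order) auto
qed

lemma cyclic_if_embeds_in_z_group: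
  assumes Z: "z_group G" and K: "group K" and f: "f \<in> hom K G" "inj_on f (carrier K)"
    and p: "Factorial_Ring.prime p" and order_K: "order K = p ^ multiplicity p (order G)"
  shows "cyclic_group K"
proof -
  have G: "group G" using Z by (simp add: z_group_def)
  interpret f: group_hom K G f using K G f(1) by (simp add: group_hom_def group_hom_axioms_def)
  let ?P = "f ` carrier K"
  have P: "subgroup ?P G" by (rule f.img_is_subgroup)
  have "card ?P = order K" using card_image[OF f(2)] by (simp add: order_def)
  then have "cyclic_group (subgroup_generated G ?P)"
    using Z P p order_K by (simp add: z_group_def sylow_subgroup_def)
  moreover have "f \<in> iso K (subgroup_generated G ?P)"
    using f P by (auto simp: iso_def hom_def bij_betw_def subgroup.carrier_subgroup_generated_subgroup)
  ultimately show ?thesis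
    using K G isomorphic_group_cyclicity[of K "subgroup_generated G ?P"]
    by (auto simp: is_iso_def group.group_subgroup_generated)
qed

lemma coprime_distinct_prime_powers:
  fixes p q :: nat
  shows "Factorial_Ring.prime p \<Longrightarrow> Factorial_Ring.prime q \<Longrightarrow> p \<noteq> q \<Longrightarrow> coprime (p ^ a) (q ^ b)"
  by (simp add: primes_coprime)

lemma multiplicity_prod_distinct_prime_powers:
  fixes P e :: "'i \<Rightarrow> nat"
  assumes "finite S" "\<And>s. s \<in> S \<Longrightarrow> Factorial_Ring.prime (P s)" "inj_on P S" "t \<in> S"
  shows "multiplicity (P t) (\<Prod>s\<in>S. P s ^ e s) = e t"
proof -
  have "(\<Prod>s\<in>S. P s ^ e s) = (\<Prod>p\<in>P ` S. p ^ e (inv_into S P p))"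
    using assms(3) by (simp add: prod.reindex)
  also have "multiplicity (P t) \<dots> = e (inv_into S P (P t))"
    using assms by (subst multiplicity_prod_prime_powers) auto
  finally show ?thesis using assms(3,4) by simp
qed

lemma multiplicity_prod_prime_powers_two_families:
  fixes q p a b :: "nat \<Rightarrow> nat"
  assumes fin: "finite I" "finite J"
    and primes: "\<And>i. i \<in> I \<Longrightarrow> Factorial_Ring.prime (q i)" "\<And>j. j \<in> J \<Longrightarrow> Factorial_Ring.prime (p j)"
    and inj: "inj_on q I" "inj_on p J" and disjoint: "q ` I \<inter> p ` J = {}"
  defines "n \<equiv> (\<Prod>i\<in>I. q i ^ a i) * (\<Prod>j\<in>J. p j ^ b j)"
  shows "i \<in> I \<Longrightarrow> multiplicity (q i) n = a i"
    and "j \<in> J \<Longrightarrow> multiplicity (p j) n = b j"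
proof -
  let ?P = "case_sum q p" and ?e = "case_sum a b" and ?S = "Sum_Type.Plus I J"
  have n: "n = (\<Prod>s\<in>?S. ?P s ^ ?e s)"
    using fin by (simp add: n_def prod.Plus comp_def)
  have "inj_on ?P ?S"
  proof (rule inj_onI)
    fix s t assume "s \<in> ?S" "t \<in> ?S" "?P s = ?P t"
    then show "s = t" using inj disjoint by (auto dest: inj_onD) (metis IntI empty_iff imageI)+
  qed
  moreover have "\<And>s. s \<in> ?S \<Longrightarrow> Factorial_Ring.prime (?P s)" using primes by auto
  ultimately have mult: "multiplicity (?P s) n = ?e s" if "s \<in> ?S" for s
    unfolding n using fin that by (intro multiplicity_prod_distinct_prime_powers) auto
  show "multiplicity (q i) n = a i" if "i \<in> I" using mult[OF InlI[OF that]] by simp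
  show "multiplicity (p j) n = b j" if "j \<in> J" using mult[OF InrI[OF that]] by simp
qed


lemma emb_mult_group_hom:
  assumes "\<And>i. i \<in> I \<Longrightarrow> group (mult_group (Bs i))" "j \<in> I"
  shows "emb I Bs j \<in> hom (mult_group (Bs j)) (mult_group (prod_brace I Bs))"
    and "inj_on (emb I Bs j) (carrier_b (Bs j))"
proof -
  have "zero_b (Bs i) \<in> carrier_b (Bs i)" "circ_b (Bs i) (zero_b (Bs i)) (zero_b (Bs i)) = zero_b (Bs i)"
    if "i \<in> I" for i
    using monoid.l_one[OF group.is_monoid[OF assms(1)[OF that]]]
      monoid.one_closed[OF group.is_monoid[OF assms(1)[OF that]]]
    by simp_all
  then show "emb I Bs j \<in> hom (mult_group (Bs j)) (mult_group (prod_brace I Bs))"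
    using assms group.is_monoid[OF assms(1)[OF assms(2)]]
    by (auto intro!: homI restrict_ext simp: emb_def monoid.m_closed[of "mult_group (Bs j)", simplified])
  show "inj_on (emb I Bs j) (carrier_b (Bs j))"
    using assms(2) by (auto intro!: inj_onI simp: emb_def fun_eq_iff split: if_splits)
qed

lemma cyclic_mult_group_prod_brace_if_embeds_in_z_group:
  fixes p e :: "nat \<Rightarrow> nat"
  assumes Z: "z_group G" and fin: "finite I"
    and factors: "\<And>i. i \<in> I \<Longrightarrow> left_brace (Bs i) \<and> card (carrier_b (Bs i)) = p i ^ e i
                    \<and> Factorial_Ring.prime (p i) \<and> multiplicity (p i) (order G) = e i"
    and p_inj: "inj_on p I"
    and f: "f \<in> hom (mult_group (prod_brace I Bs)) G" "inj_on f (carrier_b (prod_brace I Bs))"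
  shows "cyclic_group (mult_group (prod_brace I Bs))"
proof -
  have groups: "group (mult_group (Bs i))" if "i \<in> I" for i
    using factors[OF that] by (simp add: left_brace_mult_group)
  have finite_factors: "finite (carrier_b (Bs i))" if "i \<in> I" for i
    using factors[OF that] by (intro card_ge_0_finite) (simp add: prime_gt_0_nat)
  have "cyclic_group (mult_group (Bs i))" if i: "i \<in> I" for i
  proof (rule cyclic_if_embeds_in_z_group[OF Z groups[OF i], where p = "p i"])
    show "f \<circ> emb I Bs i \<in> hom (mult_group (Bs i)) G"
      using emb_mult_group_hom(1)[of I Bs, OF groups i] f(1) by (rule hom_compose)
    show "inj_on (f \<circ> emb I Bs i) (carrier (mult_group (Bs i)))"
      using emb_mult_group_hom[of I Bs, OF groups i] f
      by (auto intro!: comp_inj_on inj_on_subset[OF f(2)] simp: hom_def)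
  qed (use factors[OF i] in \<open>simp_all add: order_def\<close>)
  moreover have "coprime (order (mult_group (Bs i))) (order (mult_group (Bs k)))"
    if "i \<in> I" "k \<in> I" "i \<noteq> k" for i k
    using factors[OF that(1)] factors[OF that(2)] inj_onD[OF p_inj _ that(1,2)] that(3)
    by (auto simp: order_def intro: primes_coprime)
  ultimately show ?thesis
    unfolding mult_group_prod_brace using fin groups finite_factors
    by (intro cyclic_product_group) auto
qed

lemma pair_semidirect_brace_embeddings:
  assumes groups: "group (mult_group A)" "group (mult_group N)" "group (mult_group H)"
    and \<alpha>_zero: "\<And>y. y \<in> carrier_b H \<Longrightarrow> \<alpha> y (zero_b N) = zero_b N"
  shows "(\<lambda>a. (a, (zero_b N, zero_b H))) \<in> hom (mult_group A) (mult_group (pair_brace A (semidirect_brace N H \<alpha>)))"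
    and "(\<lambda>h. (zero_b A, (zero_b N, h))) \<in> hom (mult_group H) (mult_group (pair_brace A (semidirect_brace N H \<alpha>)))"
proof -
  interpret A: group "mult_group A" by (rule groups(1))
  interpret N: group "mult_group N" by (rule groups(2))
  interpret H: group "mult_group H" by (rule groups(3))
  show "(\<lambda>a. (a, (zero_b N, zero_b H))) \<in> hom (mult_group A) (mult_group (pair_brace A (semidirect_brace N H \<alpha>)))"
    using \<alpha>_zero N.one_closed H.one_closed N.l_one[of "zero_b N"] H.l_one[of "zero_b H"]
    by (auto intro!: homI simp: mult_group_pair_brace)
  show "(\<lambda>h. (zero_b A, (zero_b N, h))) \<in> hom (mult_group H) (mult_group (pair_brace A (semidirect_brace N H \<alpha>)))"
    using \<alpha>_zero A.one_closed N.one_closed A.l_one[of "zero_b A"] N.l_one[of "zero_b N"]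
    by (auto intro!: homI simp: mult_group_pair_brace)
qed

lemma cyclic_quotient_pair_semidirect_brace:
  fixes A :: "'a brace" and N :: "'b brace" and H :: "'c brace" and \<alpha> :: "'c \<Rightarrow> 'b \<Rightarrow> 'b"
  defines "G \<equiv> mult_group (pair_brace A (semidirect_brace N H \<alpha>))"
  assumes groups: "group (mult_group A)" "group (mult_group N)" "group (mult_group H)"
    and \<alpha>_zero: "\<And>y. y \<in> carrier_b H \<Longrightarrow> \<alpha> y (zero_b N) = zero_b N"
    and S: "S \<lhd> G" and N_in_S: "{zero_b A} \<times> carrier_b N \<times> {zero_b H} \<subseteq> S"
    and cyclic: "cyclic_group (mult_group A \<times>\<times> mult_group H)"
  shows "cyclic_group (G Mod S)"
proof -
  interpret A: group "mult_group A" by (rule groups(1))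
  interpret N: group "mult_group N" by (rule groups(2))
  interpret H: group "mult_group H" by (rule groups(3))
  interpret S: normal S G by (rule S)
  let ?\<psi> = "\<lambda>(a, h). (a, (zero_b N, h))"
  let ?\<phi> = "\<lambda>ah. S #>\<^bsub>G\<^esub> ?\<psi> ah"
  have \<psi>: "?\<psi> \<in> hom (mult_group A \<times>\<times> mult_group H) G"
    using \<alpha>_zero N.one_closed N.l_one[of "zero_b N"]
    by (auto intro!: homI simp: G_def mult_group_pair_brace)
  have "?\<phi> \<in> hom (mult_group A \<times>\<times> mult_group H) (G Mod S)"
    using hom_compose[OF \<psi> S.r_coset_hom_Mod] by (simp add: comp_def)
  moreover have "?\<phi> ` carrier (mult_group A \<times>\<times> mult_group H) = carrier (G Mod S)"
  proof (intro equalityI subsetI)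
    fix C assume "C \<in> carrier (G Mod S)"
    then obtain a x h where x: "a \<in> carrier_b A" "x \<in> carrier_b N" "h \<in> carrier_b H"
      and C: "C = S #>\<^bsub>G\<^esub> (a, (x, h))"
      by (auto simp: FactGroup_def RCOSETS_def G_def)
    let ?s = "(zero_b A, (x, zero_b H))"
    have s: "?s \<in> S" using N_in_S x by auto
    have "C = S #>\<^bsub>G\<^esub> (?s \<otimes>\<^bsub>G\<^esub> ?\<psi> (a, h))"
      using C x \<alpha>_zero H.one_closed A.l_one[simplified] N.r_one[simplified] H.l_one[simplified]
      by (simp add: G_def mult_group_pair_brace)
    also have "\<dots> = (S #>\<^bsub>G\<^esub> ?s) #>\<^bsub>G\<^esub> ?\<psi> (a, h)"
      using S.subset s x N.one_closed by (intro S.coset_mult_assoc[symmetric]) (auto simp: G_def)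
    also have "\<dots> = ?\<phi> (a, h)" using s by (simp add: S.rcos_const)
    finally have "C = ?\<phi> (a, h)" .
    then show "C \<in> ?\<phi> ` carrier (mult_group A \<times>\<times> mult_group H)"
      using x by (intro image_eqI[where x = "(a, h)"]) auto
  qed (use N.one_closed in \<open>auto simp: FactGroup_def RCOSETS_def G_def\<close>)
  ultimately have "?\<phi> \<in> epi (mult_group A \<times>\<times> mult_group H) (G Mod S)" by (simp add: epi_def)
  then show ?thesis
    using cyclic groups by (auto intro: group.cyclic_group_epimorphic_image DirProd_group S.factorgroup_is_group)
qed

lemma cyclic_DirProd_prod_braces_if_embed_in_z_group:
  fixes q p \<gamma> \<beta> :: "nat \<Rightarrow> nat"
  assumes Z: "z_group G" and fin: "finite I" "finite J"
    and As: "\<And>i. i \<in> I \<Longrightarrow> left_brace (As i) \<and> card (carrier_b (As i)) = q i ^ \<gamma> i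
               \<and> Factorial_Ring.prime (q i) \<and> multiplicity (q i) (order G) = \<gamma> i"
    and Bs: "\<And>j. j \<in> J \<Longrightarrow> left_brace (Bs j) \<and> card (carrier_b (Bs j)) = p j ^ \<beta> j
               \<and> Factorial_Ring.prime (p j) \<and> multiplicity (p j) (order G) = \<beta> j"
    and inj: "inj_on q I" "inj_on p J" and disjoint: "q ` I \<inter> p ` J = {}"
    and f: "f \<in> hom (mult_group (prod_brace I As)) G" "inj_on f (carrier_b (prod_brace I As))"
    and g: "g \<in> hom (mult_group (prod_brace J Bs)) G" "inj_on g (carrier_b (prod_brace J Bs))"
  shows "cyclic_group (mult_group (prod_brace I As) \<times>\<times> mult_group (prod_brace J Bs))"
proof (rule cyclic_DirProd)
  show "cyclic_group (mult_group (prod_brace I As))"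
    using Z fin(1) As inj(1) f by (rule cyclic_mult_group_prod_brace_if_embeds_in_z_group)
  show "cyclic_group (mult_group (prod_brace J Bs))"
    using Z fin(2) Bs inj(2) g by (rule cyclic_mult_group_prod_brace_if_embeds_in_z_group)
  have card_As: "card (carrier_b (prod_brace I As)) = (\<Prod>i\<in>I. q i ^ \<gamma> i)"
    using As by (simp add: card_PiE[OF fin(1)])
  have card_Bs: "card (carrier_b (prod_brace J Bs)) = (\<Prod>j\<in>J. p j ^ \<beta> j)"
    using Bs by (simp add: card_PiE[OF fin(2)])
  show "coprime (order (mult_group (prod_brace I As))) (order (mult_group (prod_brace J Bs)))"
    unfolding order_def mult_group_simps card_As card_Bs
  proof (intro prod_coprime_left prod_coprime_right coprime_distinct_prime_powers)
    fix i j assume "i \<in> I" "j \<in> J"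
    then show "Factorial_Ring.prime (q i)" "Factorial_Ring.prime (p j)" "q i \<noteq> p j"
      using As Bs disjoint by blast+
  qed
  show "finite (carrier (mult_group (prod_brace I As)))" "finite (carrier (mult_group (prod_brace J Bs)))"
    using card_As card_Bs As Bs fin by (auto intro!: card_ge_0_finite simp: prime_gt_0_nat)
  show "group (mult_group (prod_brace I As))" "group (mult_group (prod_brace J Bs))"
    using As Bs by (auto simp: mult_group_prod_brace intro!: product_group left_brace_mult_group)
qed

lemma cyclic_quotient_soc_pair_semidirect_brace:
  fixes A :: "'a brace" and N :: "'b brace" and H :: "'c brace" and \<alpha> :: "'c \<Rightarrow> 'b \<Rightarrow> 'b"
  defines "B \<equiv> pair_brace A (semidirect_brace N H \<alpha>)"
  assumes B: "left_brace B"
    and groups: "group (add_group A)" "group (mult_group A)" "group (add_group N)"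
      "group (mult_group N)" "group (add_group H)" "group (mult_group H)"
    and N: "trivial_brace N" and \<alpha>: "action_hom H N \<alpha>"
    and cyclic: "cyclic_group (mult_group A \<times>\<times> mult_group H)"
  shows "cyclic_group (mult_group B Mod soc B)"
proof -
  have "soc B = soc A \<times> soc (semidirect_brace N H \<alpha>)"
    unfolding B_def using groups by (intro soc_pair_brace) (simp_all add: add_group_semidirect_brace DirProd_group)
  also have "soc (semidirect_brace N H \<alpha>) = carrier_b N \<times> (soc H \<inter> ker_action H N \<alpha>)"
    by (rule soc_semidirect_brace[OF groups(3,5) N action_hom_closed[OF \<alpha>]])
  finally have "{zero_b A} \<times> carrier_b N \<times> {zero_b H} \<subseteq> soc B"
    using zero_b_mem_soc[OF groups(1,2)] zero_b_mem_soc[OF groups(5,6)]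
      subgroup.one_closed[OF normal_imp_subgroup[OF ker_action_normal[OF \<alpha> groups(6)]]]
    by auto
  then show ?thesis
    using cyclic_quotient_pair_semidirect_brace[of A N H \<alpha>] groups action_hom_zero[OF \<alpha> groups(3)]
      soc_normal[OF B] cyclic
    by (simp add: B_def)
qed

theorem mainTheorem9:
  fixes v m r :: nat
    and qs ps :: "nat \<Rightarrow> nat" and \<gamma> \<beta> :: "nat \<Rightarrow> nat"
    and As :: "nat \<Rightarrow> 'a brace" and Bs :: "nat \<Rightarrow> 'b brace"
    and \<alpha> :: "(nat \<Rightarrow> 'b) \<Rightarrow> (nat \<Rightarrow> 'b) \<Rightarrow> (nat \<Rightarrow> 'b)"
  defines "Abar \<equiv> prod_brace {..<v} As"
    and "H \<equiv> prod_brace {..<m} Bs"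
    and "N \<equiv> prod_brace {m..<r} Bs"
  defines "Bbar \<equiv> semidirect_brace N H \<alpha>"
  defines "A \<equiv> pair_brace Abar Bbar"
  defines "I \<equiv> (\<lambda>j. {b \<in> soc (Bs j). emb {..<m} Bs j b \<in> ker_action H N \<alpha>})"
  assumes "m \<le> r"
    and qs_prime: "\<forall>i<v. Factorial_Ring.prime (qs i) \<and> odd (qs i)"
    and ps_prime: "\<forall>j<r. Factorial_Ring.prime (ps j) \<and> odd (ps j)"
    and qs_dist: "inj_on qs {..<v}"
    and ps_mono: "strict_mono_on {..<r} ps"
    and qs_ps_dist: "qs ` {..<v} \<inter> ps ` {..<r} = {}"
    and \<gamma>_pos: "\<forall>i<v. \<gamma> i > 0"
    and \<beta>_pos: "\<forall>j<r. \<beta> j > 0"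
    and As_brace: "\<forall>i<v. left_brace (As i) \<and> cyclic_group (add_group (As i))
                      \<and> card (carrier_b (As i)) = qs i ^ \<gamma> i"
    and Bs_brace: "\<forall>j<r. left_brace (Bs j) \<and> cyclic_group (add_group (Bs j))
                      \<and> card (carrier_b (Bs j)) = ps j ^ \<beta> j"
    and Bs_trivial: "\<forall>j. m \<le> j \<and> j < r \<longrightarrow> trivial_brace (Bs j)"
    and \<alpha>_hom: "action_hom H N \<alpha>"
    and \<alpha>_nontriv_restr: "\<forall>j<m. \<exists>b\<in>carrier_b (Bs j). emb {..<m} Bs j b \<notin> ker_action H N \<alpha>"
    and \<alpha>_nontriv_act: "\<forall>j. m \<le> j \<and> j < r \<longrightarrow>
          (\<exists>y\<in>carrier_b H. \<exists>b\<in>carrier_b (Bs j). \<alpha> y (emb {m..<r} Bs j b) \<noteq> emb {m..<r} Bs j b)"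
    and A_brace: "left_brace A"
    and A_finite: "finite (carrier_b A)"
    and A_odd: "odd (card (carrier_b A))"
    and A_add_cyclic: "cyclic_group (add_group A)"
    and A_zgroup: "z_group (mult_group A)"
  shows "soc A = soc Abar \<times> (carrier_b N \<times> (\<Pi>\<^sub>E j\<in>{..<m}. I j))
         \<and> cyclic_group (mult_group A Mod soc A)"
proof -
  have ps_inj: "inj_on ps {..<r}" using ps_mono by (rule strict_mono_on_imp_inj_on)
  have groups: "group (add_group Abar)" "group (mult_group Abar)" "group (add_group N)"
    "group (mult_group N)" "group (add_group H)" "group (mult_group H)"
    unfolding Abar_def N_def H_def using As_brace Bs_brace \<open>m \<le> r\<close>
    by (auto simp: add_group_prod_brace mult_group_prod_brace
        intro!: product_group left_brace_add_group left_brace_mult_group)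
  have N_trivial: "trivial_brace N"
    unfolding N_def using Bs_trivial by (intro trivial_brace_prod_brace) auto
  have soc_A: "soc A = soc Abar \<times> (carrier_b N \<times> (\<Pi>\<^sub>E j\<in>{..<m}. I j))"
    unfolding A_def Bbar_def I_def H_def
  proof (rule soc_pair_semidirect_prod_brace[OF groups(1,3) N_trivial])
    show "left_brace (Bs j) \<and> finite (carrier_b (Bs j))" if "j \<in> {..<m}" for j
      using Bs_brace ps_prime that \<open>m \<le> r\<close> by (auto intro!: card_ge_0_finite simp: prime_gt_0_nat)
    show "coprime (card (carrier_b (Bs j))) (card (carrier_b (Bs k)))"
      if "j \<in> {..<m}" "k \<in> {..<m}" "j \<noteq> k" for j k
    proof -
      have "j < r" "k < r" using that \<open>m \<le> r\<close> by auto
      then show ?thesis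
        using Bs_brace ps_prime inj_onD[OF ps_inj, of j k] that(3)
        by (metis coprime_distinct_prime_powers lessThan_iff)
    qed
    show "action_hom (prod_brace {..<m} Bs) N \<alpha>" using \<alpha>_hom by (simp add: H_def)
  qed simp
  have "order (mult_group A) = (\<Prod>i<v. qs i ^ \<gamma> i) * ((\<Prod>j\<in>{m..<r}. ps j ^ \<beta> j) * (\<Prod>j<m. ps j ^ \<beta> j))"
    using As_brace Bs_brace \<open>m \<le> r\<close>
    by (simp add: order_def A_def Bbar_def Abar_def N_def H_def card_cartesian_product card_PiE)
  also have "\<dots> = (\<Prod>i<v. qs i ^ \<gamma> i) * (\<Prod>j<r. ps j ^ \<beta> j)"
    using \<open>m \<le> r\<close> by (simp add: lessThan_atLeast0 prod.atLeastLessThan_concat ac_simps)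
  finally have order_A: "order (mult_group A) = \<dots>" .
  have "cyclic_group (mult_group Abar \<times>\<times> mult_group H)"
    unfolding Abar_def H_def
  proof (rule cyclic_DirProd_prod_braces_if_embed_in_z_group[OF A_zgroup])
    show "left_brace (As i) \<and> card (carrier_b (As i)) = qs i ^ \<gamma> i \<and> Factorial_Ring.prime (qs i)
        \<and> multiplicity (qs i) (order (mult_group A)) = \<gamma> i" if "i \<in> {..<v}" for i
      unfolding order_A using that As_brace qs_prime ps_prime qs_dist ps_inj qs_ps_dist
      by (auto intro: multiplicity_prod_prime_powers_two_families(1))
    show "left_brace (Bs j) \<and> card (carrier_b (Bs j)) = ps j ^ \<beta> j \<and> Factorial_Ring.prime (ps j)
        \<and> multiplicity (ps j) (order (mult_group A)) = \<beta> j" if "j \<in> {..<m}" for j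
      unfolding order_A using that \<open>m \<le> r\<close> Bs_brace qs_prime ps_prime qs_dist ps_inj qs_ps_dist
      by (auto intro: multiplicity_prod_prime_powers_two_families(2))
    show "inj_on ps {..<m}" "qs ` {..<v} \<inter> ps ` {..<m} = {}"
      using ps_inj qs_ps_dist \<open>m \<le> r\<close> by (auto intro: inj_on_subset)
    show "(\<lambda>a. (a, (zero_b N, zero_b H))) \<in> hom (mult_group (prod_brace {..<v} As)) (mult_group A)"
      "(\<lambda>h. (zero_b Abar, (zero_b N, h))) \<in> hom (mult_group (prod_brace {..<m} Bs)) (mult_group A)"
      using pair_semidirect_brace_embeddings[of Abar N H \<alpha>, OF groups(2,4,6)]
        action_hom_zero[OF \<alpha>_hom groups(3)]
      by (simp_all add: A_def Bbar_def Abar_def H_def)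
  qed (auto intro: qs_dist inj_onI)
  then have "cyclic_group (mult_group A Mod soc A)"
    using cyclic_quotient_soc_pair_semidirect_brace[of Abar N H \<alpha>] A_brace groups N_trivial \<alpha>_hom
    by (simp add: A_def Bbar_def)
  with soc_A show ?thesis by simp
qed

end
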